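(* Let $F$, $H$, $X$, $\Omega$, $Q$ and the sequences generated by the IneIREG method be as described in the context, suppose $H$ is $\mu$-strongly monotone for some $\mu>0$, and suppose $0<\lambda_k<1/L_k$ for all $k\ge0$, where $L_k:=L_F+\eta_kL_H$. Let $\beta_k:=\big(\frac{1}{1-\lambda_k^2L_k^2}+\frac{1}{2\lambda_k\eta_k\mu}\big)^{-1}$. Then for all $x\in X$ and $k\ge0$, $$(1-\beta_k)\|w_k-x\|^2-\|x_{k+1}-x\|^2\ge2\lambda_k\langle F(x),y_k-x\rangle+2\lambda_k\eta_k\langle H(x),y_k-x\rangle.$$
   Context: Work in $\mathbb{R}^n$ with Euclidean inner product $\langle\cdot,\cdot\rangle$ and norm $\|\cdot\|$. The maps $F\colon \mathrm{Dom}\,F\to\mathbb{R}^n$ and $H\colon\mathrm{Dom}\,H\to\mathbb{R}^n$ are monotone and Lipschitz continuous with constants $L_F>0$ and $L_H>0$; $H$ is $\mu$-strongly monotone means $\langle H(x)-H(y),x-y\rangle\ge\mu\|x-y\|^2$ for all $x,y\in\mathrm{Dom}\,H$. $X$ is a nonempty compact convex set and $\Omega$ a nonempty closed convex set with $X\subset\Omega\subset\mathrm{Dom}\,F\cap\mathrm{Dom}\,H$; $P_X,P_\Omega$ denote orthogonal projections. $Q:=\{x\in X:\langle F(x),y-x\rangle\ge0\ \forall y\in X\}$ is assumed nonempty. IneIREG method: start with $x_0=x_{-1}\in X$; for $k=0,1,\dots$, with parameters $\alpha_k\ge0$, $\lambda_k>0$, $\eta_k>0$, set $w_k=x_k+\alpha_k(x_k-x_{k-1})$,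 $w'_k=P_\Omega(w_k)$, $y_k=P_X\big(w_k-\lambda_k(F(w'_k)+\eta_kH(w'_k))\big)$, $x_{k+1}=P_X\big(w_k-\lambda_k(F(y_k)+\eta_kH(y_k))\big)$. *)

theory Defs
  imports "HOL-Analysis.Analysis"
begin

definition monotone_op :: "'a::real_inner set \<Rightarrow> ('a \<Rightarrow> 'a) \<Rightarrow> bool" where
  "monotone_op D T \<longleftrightarrow> (\<forall>x\<in>D. \<forall>y\<in>D. (T x - T y) \<bullet> (x - y) \<ge> 0)"

definition strongly_monotone_op :: "real \<Rightarrow> 'a::real_inner set \<Rightarrow> ('a \<Rightarrow> 'a) \<Rightarrow> bool" where
  "strongly_monotone_op \<mu> D T \<longleftrightarrow> (\<forall>x\<in>D. \<forall>y\<in>D. (T x - T y) \<bullet> (x - y) \<ge> \<mu> * (norm (x - y))\<^sup>2)"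

end

theory Submission
  imports Defs
begin

text \<open>For \<open>G = F + \<eta>\<^sub>k H\<close> one step of the method is an extragradient step for \<open>G\<close>,
  which is \<open>L\<^sub>k\<close>-Lipschitz and \<open>\<eta>\<^sub>k \<mu>\<close>-strongly monotone. The two projection
  inequalities give the usual extragradient estimate
  \<open>|x\<^sub>k\<^sub>+\<^sub>1 - x|\<^sup>2 \<le> |w\<^sub>k - x|\<^sup>2 - a |w\<^sub>k - y\<^sub>k|\<^sup>2 - 2 \<lambda>\<^sub>k \<langle>G y\<^sub>k, y\<^sub>k - x\<rangle>\<close>
  with \<open>a = 1 - \<lambda>\<^sub>k\<^sup>2 L\<^sub>k\<^sup>2\<close>; the Lipschitz bound may be applied at \<open>w'\<^sub>k\<close> because
  projecting onto \<open>\<Omega> \<supseteq> X\<close> does not increase the distance to \<open>y\<^sub>k\<close>. Strong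
  monotonicity bounds \<open>2 \<lambda>\<^sub>k \<langle>G y\<^sub>k, y\<^sub>k - x\<rangle>\<close> below by
  \<open>b |y\<^sub>k - x|\<^sup>2 + 2 \<lambda>\<^sub>k \<langle>G x, y\<^sub>k - x\<rangle>\<close> with \<open>b = 2 \<lambda>\<^sub>k \<eta>\<^sub>k \<mu>\<close>, and by the
  triangle inequality \<open>a |w\<^sub>k - y\<^sub>k|\<^sup>2 + b |y\<^sub>k - x|\<^sup>2 \<ge> (1/a + 1/b)\<^sup>-\<^sup>1 |w\<^sub>k - x|\<^sup>2 = \<beta>\<^sub>k |w\<^sub>k - x|\<^sup>2\<close>.\<close>

lemma parallel_sum_norm_add_square_le:
  fixes u v :: "'a::real_normed_vector" and a b :: real
  assumes a: "a > 0" and b: "b > 0"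
  shows "inverse (1/a + 1/b) * (norm (u + v))\<^sup>2 \<le> a * (norm u)\<^sup>2 + b * (norm v)\<^sup>2"
proof -
  have "(a + b) * (a * (norm u)\<^sup>2 + b * (norm v)\<^sup>2) - a * b * (norm u + norm v)\<^sup>2
        = (a * norm u - b * norm v)\<^sup>2"
    by algebra
  then have "a * b * (norm u + norm v)\<^sup>2 \<le> (a + b) * (a * (norm u)\<^sup>2 + b * (norm v)\<^sup>2)"
    by (metis diff_ge_0_iff_ge zero_le_power2)
  then have "a * b * (norm u + norm v)\<^sup>2 / (a + b) \<le> a * (norm u)\<^sup>2 + b * (norm v)\<^sup>2"
    using a b by (simp add: pos_divide_le_eq mult.commute)
  moreover have "inverse (1/a + 1/b) = a * b / (a + b)"
    using a b by (simp add: field_simps)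
  moreover have "(norm (u + v))\<^sup>2 \<le> (norm u + norm v)\<^sup>2"
    by (simp add: norm_triangle_ineq power_mono)
  then have "a * b * (norm (u + v))\<^sup>2 / (a + b) \<le> a * b * (norm u + norm v)\<^sup>2 / (a + b)"
    using a b by (intro divide_right_mono mult_left_mono) auto
  ultimately show ?thesis
    by simp
qed

lemma closest_point_three_point:
  fixes W d z :: "'a::euclidean_space" and X :: "'a set"
  defines "P \<equiv> closest_point X (W - d)"
  assumes "convex X" "closed X" "z \<in> X"
  shows "(norm (P - z))\<^sup>2 \<le> (norm (W - z))\<^sup>2 - (norm (W - P))\<^sup>2 - 2 * (d \<bullet> (P - z))"
proof -
  have "(W - d - P) \<bullet> (z - P) \<le> 0"
    unfolding P_def by (rule closest_point_dot[OF assms(2-4)])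
  then have proj: "d \<bullet> (P - z) \<le> (W - P) \<bullet> (P - z)"
    by (simp add: inner_diff_left inner_diff_right)
  moreover have "(W - P) \<bullet> (P - z) = ((norm (W - z))\<^sup>2 - (norm (W - P))\<^sup>2 - (norm (P - z))\<^sup>2) / 2"
    using dot_norm[of "W - P" "P - z"] by simp
  ultimately show ?thesis
    by (simp add: field_simps)
qed

lemma extragradient_step_bound:
  fixes W V Y P z gV gY :: "'a::euclidean_space"
  assumes Y_eq: "Y = closest_point X (W - lm *\<^sub>R gV)"
    and P_eq: "P = closest_point X (W - lm *\<^sub>R gY)"
    and X: "convex X" "closed X" and z: "z \<in> X" and lm: "lm \<ge> 0"
    and lip: "norm (gV - gY) \<le> L * norm (V - Y)"
    and near: "norm (V - Y) \<le> norm (W - Y)"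
  shows "(norm (P - z))\<^sup>2
           \<le> (norm (W - z))\<^sup>2 - (1 - lm\<^sup>2 * L\<^sup>2) * (norm (W - Y))\<^sup>2 - 2 * lm * (gY \<bullet> (Y - z))"
proof -
  have "P \<in> X"
    unfolding P_eq using closest_point_in_set X z by blast
  have to_z: "(norm (P - z))\<^sup>2
      \<le> (norm (W - z))\<^sup>2 - (norm (W - P))\<^sup>2 - 2 * lm * (gY \<bullet> (P - z))"
    using closest_point_three_point[OF X z, of W "lm *\<^sub>R gY"] unfolding P_eq by simp
  have to_P: "(norm (Y - P))\<^sup>2
      \<le> (norm (W - P))\<^sup>2 - (norm (W - Y))\<^sup>2 - 2 * lm * (gV \<bullet> (Y - P))"
    using closest_point_three_point[OF X \<open>P \<in> X\<close>, of W "lm *\<^sub>R gV"] unfolding Y_eq by simp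
  have "(gV - gY) \<bullet> (P - Y) \<le> L * norm (V - Y) * norm (P - Y)"
    using norm_cauchy_schwarz[of "gV - gY" "P - Y"] mult_right_mono[OF lip norm_ge_zero, of "P - Y"]
    by linarith
  then have "2 * lm * (gV \<bullet> (P - Y)) - 2 * lm * (gY \<bullet> (P - Y)) \<le> 2 * (lm * L * norm (V - Y)) * norm (P - Y)"
    using lm by (simp add: mult_left_mono mult.assoc inner_diff_left right_diff_distrib[symmetric])
  also have "\<dots> \<le> (lm * L * norm (V - Y))\<^sup>2 + (norm (P - Y))\<^sup>2"
    by (rule sum_squares_bound)
  also have "(lm * L * norm (V - Y))\<^sup>2 \<le> lm\<^sup>2 * L\<^sup>2 * (norm (W - Y))\<^sup>2"
    using near by (simp add: power_mult_distrib power_mono mult_left_mono)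
  finally have cross: "2 * lm * (gV \<bullet> (P - Y)) - 2 * lm * (gY \<bullet> (P - Y))
      \<le> lm\<^sup>2 * L\<^sup>2 * (norm (W - Y))\<^sup>2 + (norm (Y - P))\<^sup>2"
    by (simp add: norm_minus_commute)
  have "gY \<bullet> (P - z) = gY \<bullet> (Y - z) + gY \<bullet> (P - Y)"
    by (simp add: inner_diff_right)
  then have "2 * lm * (gY \<bullet> (P - z)) = 2 * lm * (gY \<bullet> (Y - z)) + 2 * lm * (gY \<bullet> (P - Y))"
    by (simp add: distrib_left)
  moreover have "2 * lm * (gV \<bullet> (Y - P)) = - (2 * lm * (gV \<bullet> (P - Y)))"
    by (simp add: inner_diff_right right_diff_distrib)
  moreover have "(1 - lm\<^sup>2 * L\<^sup>2) * (norm (W - Y))\<^sup>2 = (norm (W - Y))\<^sup>2 - lm\<^sup>2 * L\<^sup>2 * (norm (W - Y))\<^sup>2"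
    by (simp add: left_diff_distrib)
  ultimately show ?thesis
    using to_z to_P cross by linarith
qed

lemma strongly_monotone_op_add_scaleR:
  fixes F H :: "'a::real_inner \<Rightarrow> 'a"
  assumes "monotone_op D1 F" "strongly_monotone_op \<mu> D2 H" "e \<ge> 0"
  shows "strongly_monotone_op (e * \<mu>) (D1 \<inter> D2) (\<lambda>u. F u + e *\<^sub>R H u)"
  unfolding strongly_monotone_op_def
proof (intro ballI)
  fix u v assume "u \<in> D1 \<inter> D2" "v \<in> D1 \<inter> D2"
  then have F_uv: "(F u - F v) \<bullet> (u - v) \<ge> 0"
    and H_uv: "(H u - H v) \<bullet> (u - v) \<ge> \<mu> * (norm (u - v))\<^sup>2"
    using assms(1,2) unfolding monotone_op_def strongly_monotone_op_def by auto
  have "(F u + e *\<^sub>R H u - (F v + e *\<^sub>R H v)) \<bullet> (u - v)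
      = (F u - F v) \<bullet> (u - v) + e * ((H u - H v) \<bullet> (u - v))"
    by (simp add: inner_simps algebra_simps)
  moreover have "e * ((H u - H v) \<bullet> (u - v)) \<ge> e * \<mu> * (norm (u - v))\<^sup>2"
    using H_uv assms(3) by (metis mult.assoc mult_left_mono)
  ultimately show "(F u + e *\<^sub>R H u - (F v + e *\<^sub>R H v)) \<bullet> (u - v) \<ge> e * \<mu> * (norm (u - v))\<^sup>2"
    using F_uv by linarith
qed

lemma extragradient_strongly_monotone_bound:
  fixes G :: "'a::euclidean_space \<Rightarrow> 'a"
  assumes Y_eq: "Y = closest_point X (W - lm *\<^sub>R G (closest_point \<Omega> W))"
    and P_eq: "P = closest_point X (W - lm *\<^sub>R G Y)"
    and X: "convex X" "closed X" and \<Omega>: "convex \<Omega>" "closed \<Omega>"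
    and X_sub: "X \<subseteq> \<Omega>" and \<Omega>_sub: "\<Omega> \<subseteq> D"
    and G_lip: "lipschitz_on L D G" and G_strong: "strongly_monotone_op m D G"
    and m_pos: "m > 0" and lm_pos: "lm > 0" and lm_L: "lm * L < 1" and z: "z \<in> X"
  shows "(1 - inverse (1 / (1 - lm\<^sup>2 * L\<^sup>2) + 1 / (2 * lm * m))) * (norm (W - z))\<^sup>2
           - (norm (P - z))\<^sup>2 \<ge> 2 * lm * (G z \<bullet> (Y - z))"
proof -
  define V where "V = closest_point \<Omega> W"
  define a where "a = 1 - lm\<^sup>2 * L\<^sup>2"
  define b where "b = 2 * lm * m"
  have "Y \<in> X"
    unfolding Y_eq using closest_point_in_set X z by blast
  have "\<Omega> \<noteq> {}"
    using X_sub z by blast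
  then have "V \<in> \<Omega>"
    unfolding V_def using closest_point_in_set \<Omega> by blast
  have near: "norm (V - Y) \<le> norm (W - Y)"
    using closest_point_lipschitz[OF \<Omega> \<open>\<Omega> \<noteq> {}\<close>, of W Y] closest_point_self[of Y \<Omega>] \<open>Y \<in> X\<close> X_sub z
    unfolding V_def dist_norm by auto
  have lip: "norm (G V - G Y) \<le> L * norm (V - Y)"
    using lipschitz_on_normD[OF G_lip] \<open>V \<in> \<Omega>\<close> \<open>Y \<in> X\<close> X_sub \<Omega>_sub by blast
  have step: "(norm (P - z))\<^sup>2 \<le> (norm (W - z))\<^sup>2 - a * (norm (W - Y))\<^sup>2 - 2 * lm * (G Y \<bullet> (Y - z))"
    using extragradient_step_bound[OF Y_eq[folded V_def] P_eq X z _ lip near] lm_pos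
    unfolding a_def by simp
  have "(G Y - G z) \<bullet> (Y - z) \<ge> m * (norm (Y - z))\<^sup>2"
    using G_strong \<open>Y \<in> X\<close> z X_sub \<Omega>_sub unfolding strongly_monotone_op_def by blast
  then have "G Y \<bullet> (Y - z) \<ge> m * (norm (Y - z))\<^sup>2 + G z \<bullet> (Y - z)"
    by (simp add: inner_diff_left)
  then have "2 * lm * (m * (norm (Y - z))\<^sup>2 + G z \<bullet> (Y - z)) \<le> 2 * lm * (G Y \<bullet> (Y - z))"
    using lm_pos by (simp add: mult_left_mono)
  then have strong: "2 * lm * (G Y \<bullet> (Y - z)) \<ge> b * (norm (Y - z))\<^sup>2 + 2 * lm * (G z \<bullet> (Y - z))"
    unfolding b_def by (simp only: distrib_left mult.assoc)
  have "0 \<le> lm * L"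
    using lm_pos lipschitz_on_nonneg[OF G_lip] by simp
  then have "a > 0"
    using lm_L unfolding a_def by (simp add: power_mult_distrib[symmetric] power_less_one_iff)
  moreover have "b > 0"
    using lm_pos m_pos unfolding b_def by simp
  ultimately have "inverse (1/a + 1/b) * (norm (W - z))\<^sup>2 \<le> a * (norm (W - Y))\<^sup>2 + b * (norm (Y - z))\<^sup>2"
    using parallel_sum_norm_add_square_le[of a b "W - Y" "Y - z"] by simp
  with step strong show ?thesis
    unfolding a_def b_def by (simp add: algebra_simps)
qed

theorem corollary4p5:
  fixes F H :: "'a::euclidean_space \<Rightarrow> 'a"
    and DF DH X \<Omega> :: "'a set"
    and LF LH \<mu> :: real
    and \<alpha> lam \<eta> :: "nat \<Rightarrow> real"
    and x w w' y :: "nat \<Rightarrow> 'a"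
  assumes F_mono: "monotone_op DF F" and H_mono: "monotone_op DH H"
    and F_lip: "lipschitz_on LF DF F" and H_lip: "lipschitz_on LH DH H"
    and LF_pos: "LF > 0" and LH_pos: "LH > 0"
    and X_ne: "X \<noteq> {}" and X_compact: "compact X" and X_convex: "convex X"
    and \<Omega>_ne: "\<Omega> \<noteq> {}" and \<Omega>_closed: "closed \<Omega>" and \<Omega>_convex: "convex \<Omega>"
    and X_sub: "X \<subseteq> \<Omega>" and \<Omega>_sub: "\<Omega> \<subseteq> DF \<inter> DH"
    and Q_ne: "{z \<in> X. \<forall>v\<in>X. F z \<bullet> (v - z) \<ge> 0} \<noteq> {}"
    and \<mu>_pos: "\<mu> > 0" and H_strong: "strongly_monotone_op \<mu> DH H"
    and \<alpha>_nonneg: "\<And>k. \<alpha> k \<ge> 0"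
    and lam_pos: "\<And>k. lam k > 0"
    and \<eta>_pos: "\<And>k. \<eta> k > 0"
    and lam_bound: "\<And>k. lam k < 1 / (LF + \<eta> k * LH)"
    and x0: "x 0 \<in> X"
    and w_def: "\<And>k. w k = x k + \<alpha> k *\<^sub>R (x k - (if k = 0 then x 0 else x (k - 1)))"
    and w'_def: "\<And>k. w' k = closest_point \<Omega> (w k)"
    and y_def: "\<And>k. y k = closest_point X (w k - lam k *\<^sub>R (F (w' k) + \<eta> k *\<^sub>R H (w' k)))"
    and x_def: "\<And>k. x (Suc k) = closest_point X (w k - lam k *\<^sub>R (F (y k) + \<eta> k *\<^sub>R H (y k)))"
  shows "\<forall>z\<in>X. \<forall>k.
    (let Lk = LF + \<eta> k * LH;
         \<beta> = inverse (1 / (1 - (lam k)\<^sup>2 * Lk\<^sup>2) + 1 / (2 * lam k * \<eta> k * \<mu>))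
     in (1 - \<beta>) * (norm (w k - z))\<^sup>2 - (norm (x (Suc k) - z))\<^sup>2
        \<ge> 2 * lam k * (F z \<bullet> (y k - z)) + 2 * lam k * \<eta> k * (H z \<bullet> (y k - z)))"
proof (intro ballI allI)
  fix z k assume "z \<in> X"
  define G where "G = (\<lambda>u. F u + \<eta> k *\<^sub>R H u)"
  have y_eq: "y k = closest_point X (w k - lam k *\<^sub>R G (closest_point \<Omega> (w k)))"
    by (simp add: y_def w'_def G_def)
  have x_eq: "x (Suc k) = closest_point X (w k - lam k *\<^sub>R G (y k))"
    by (simp add: x_def G_def)
  have G_lip: "lipschitz_on (LF + \<eta> k * LH) (DF \<inter> DH) G"
    unfolding G_def using \<eta>_pos[of k]
    by (intro lipschitz_on_add lipschitz_on_cmult_nonneg lipschitz_on_subset[OF F_lip]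
        lipschitz_on_subset[OF H_lip]) auto
  have G_strong: "strongly_monotone_op (\<eta> k * \<mu>) (DF \<inter> DH) G"
    unfolding G_def using strongly_monotone_op_add_scaleR[OF F_mono H_strong] \<eta>_pos[of k] by simp
  have "lam k * (LF + \<eta> k * LH) < 1"
    using lam_bound[of k] LF_pos LH_pos \<eta>_pos[of k] by (simp add: field_simps add_pos_pos)
  with \<mu>_pos \<eta>_pos[of k] have "2 * lam k * (G z \<bullet> (y k - z))
      \<le> (1 - inverse (1 / (1 - (lam k)\<^sup>2 * (LF + \<eta> k * LH)\<^sup>2) + 1 / (2 * lam k * (\<eta> k * \<mu>))))
        * (norm (w k - z))\<^sup>2 - (norm (x (Suc k) - z))\<^sup>2"
    by (intro extragradient_strongly_monotone_bound[OF y_eq x_eq X_convex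
        compact_imp_closed[OF X_compact] \<Omega>_convex \<Omega>_closed X_sub \<Omega>_sub G_lip G_strong
        _ lam_pos _ \<open>z \<in> X\<close>]) auto
  then show "let Lk = LF + \<eta> k * LH;
         \<beta> = inverse (1 / (1 - (lam k)\<^sup>2 * Lk\<^sup>2) + 1 / (2 * lam k * \<eta> k * \<mu>))
     in (1 - \<beta>) * (norm (w k - z))\<^sup>2 - (norm (x (Suc k) - z))\<^sup>2
        \<ge> 2 * lam k * (F z \<bullet> (y k - z)) + 2 * lam k * \<eta> k * (H z \<bullet> (y k - z))"
    unfolding G_def Let_def by (simp add: inner_add_left mult.assoc distrib_left)
qed

end
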